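(* The loss of information about the receiver's initial position due to the nuisance parameters is $\mathbf G(\mathbf p_{U,0},\mathbf p_{U,0})=\sum_b\frac{\mathbf a_b\mathbf a_b^T}{\sum_{u,k}\mathrm{SNR}_{bu,k}\omega_{bU,k}}+\frac{\mathbf a_Q\mathbf a_Q^T}{\sum_{q,u,k}\mathrm{SNR}_{qu,k}\omega_{qU,k}}+\sum_b\frac{\mathbf d_b\mathbf d_b^T}{\sum_{u,k}\tfrac12\mathrm{SNR}_{bu,k}\alpha_{obu,k}^2}+\frac{\mathbf d_Q\mathbf d_Q^T}{\sum_{q,u,k}\tfrac12\mathrm{SNR}_{qu,k}\alpha_{oqu,k}^2}$, where $\mathbf a_b=\sum_{k,u}\mathrm{SNR}_{bu,k}\frac{\omega_{bU,k}}{c}\boldsymbol\Delta_{bu,k}$, $\mathbf a_Q=\sum_{q,u,k}\mathrm{SNR}_{qu,k}\frac{\omega_{qU,k}}{c}\boldsymbol\Delta_{qu,k}$, $\mathbf d_b=\sum_{u,k}\mathrm{SNR}_{bu,k}\frac{f_c\alpha_{obu,k}^2}{2}\nabla_{\mathbf p_{U,0}}\nu_{bU,k}$, $\mathbf d_Q=\sum_{q,u,k}\mathrm{SNR}_{qu,k}\frac{f_c\alpha_{oqu,k}^2}{2}\nabla_{\mathbf p_{U,0}}\nu_{qU,k}$.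
   Context: System: $N_B$ single-antenna LEO satellites indexed by $b$, $N_Q$ mutually synchronized single-antenna base stations (BSs) indexed by $q$, and a receiver with $N_U$ antennas indexed by $u$; transmissions occur in $N_K$ slots indexed by $k$, spaced $\Delta_t$ apart; $c$ is the speed of light, $f_c$ the carrier frequency. Receiver antenna $u$ is at $\mathbf p_{u,k}=\mathbf p_{U,0}+k\Delta_t\mathbf v_{U,0}+\mathbf Q(\boldsymbol\Phi_U)\tilde{\mathbf s}_u$, with $\mathbf Q(\boldsymbol\Phi_U)$ the 3D rotation matrix for orientation angles $\boldsymbol\Phi_U=[\alpha_U,\psi_U,\varphi_U]^T$ and $\tilde{\mathbf s}_u$ a known offset. LEO $b$ has known nominal position/velocity $\mathbf p_{b,k},\mathbf v_{b,k}$ and unknown constant position offset $\check{\mathbf p}_{b,0}$ and velocity offset $\check{\mathbf v}_{b,0}$; BSs are static and known. $\boldsymbol\Delta_{xy,k}$ is the unit vector from entity $x$ to entity $y$ at slot $k$ ($U$: receiver centroid, $u$: antenna $u$). Channel parameters: LEO–receiver link: delays $\tau_{bu,k}$, Dopplers $\nu_{bU,k}=\boldsymbol\Delta_{bU,k}^T(\mathbf v_{b,k}+\check{\mathbf v}_{b,0}-\mathbf v_{U,0})/c$, gains, time offset $\delta_{bU}$, frequency offset $\epsilon_{bU}$; BS–receiver link: delays $\tau_{qu,k}$, Dopplers $\nu_{qU,k}=-\boldsymbol\Delta_{qU,k}^T\mathbf v_{U,0}/c$, gains, common offsets $\delta_{QU},\epsilon_{QU}$; LEO–BS link: delays $\tau_{bq,k}$,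 Dopplers $\nu_{bq,k}=\boldsymbol\Delta_{bq,k}^T(\mathbf v_{b,k}+\check{\mathbf v}_{b,0})/c$, gains, offsets $\delta_{bQ},\epsilon_{bQ}$. $\mathrm{SNR}_{bu,k},\mathrm{SNR}_{qu,k},\mathrm{SNR}_{bq,k}$ are the received SNRs; $\alpha_{obu,k},\alpha_{oqu,k},\alpha_{obq,k}$ the RMS time durations; $\alpha_{1x,k},\alpha_{2x,k}$ the effective baseband bandwidth and baseband–carrier correlation of transmitter $x$; $f_{obU,k}=f_c(1-\nu_{bU,k})+\epsilon_{bU}$, $f_{oqU,k}=f_c(1-\nu_{qU,k})+\epsilon_{QU}$, $f_{obq,k}=f_c(1-\nu_{bq,k})+\epsilon_{bQ}$, and $\omega_{bU,k}=\alpha_{1b,k}^2+2f_{obU,k}\alpha_{1b,k}\alpha_{2b,k}+f_{obU,k}^2$, $\omega_{qU,k}=\alpha_{1q,k}^2+2f_{oqU,k}\alpha_{1q,k}\alpha_{2q,k}+f_{oqU,k}^2$, $\omega_{bq,k}=\alpha_{1q,k}^2+2f_{obq,k}\alpha_{1q,k}\alpha_{2q,k}+f_{obq,k}^2$. Channel-parameter FIM (links mutually independent, contributions additive): each observation (antenna $u$, slot $k$, LEO $b$) contributes $F(\tau_{bu,k},\tau_{bu,k})=F(\delta_{bU},\delta_{bU})=-F(\tau_{bu,k},\delta_{bU})=\mathrm{SNR}_{bu,k}\omega_{bU,k}$, $F(\nu_{bU,k},\nu_{bU,k})=\tfrac12\mathrm{SNR}_{bu,k}f_c^2\alpha_{obu,k}^2$,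 $F(\nu_{bU,k},\epsilon_{bU})=-\tfrac12\mathrm{SNR}_{bu,k}f_c\alpha_{obu,k}^2$, $F(\epsilon_{bU},\epsilon_{bU})=\tfrac12\mathrm{SNR}_{bu,k}\alpha_{obu,k}^2$, a gain-only diagonal term, and all other entries zero; the BS–receiver (indices $qu,k$, offsets $\delta_{QU},\epsilon_{QU}$, $\omega_{qU,k},\alpha_{oqu,k}$) and LEO–BS (indices $bq,k$, offsets $\delta_{bQ},\epsilon_{bQ}$, $\omega_{bq,k},\alpha_{obq,k}$) links are analogous. Location FIM: $\mathbf J_{\boldsymbol\kappa}=\boldsymbol\Upsilon\mathbf J_{\boldsymbol\eta}\boldsymbol\Upsilon^T$ where $\boldsymbol\Upsilon$ is the Jacobian with nonzero derivatives $\nabla_{\mathbf p_{U,0}}\tau_{bu,k}=\boldsymbol\Delta_{bu,k}/c$, $\nabla_{\mathbf p_{U,0}}\tau_{qu,k}=\boldsymbol\Delta_{qu,k}/c$, $\nabla_{\check{\mathbf p}_{b,0}}\tau_{bu,k}=-\boldsymbol\Delta_{bu,k}/c$, $\nabla_{\check{\mathbf p}_{b,0}}\tau_{bq,k}=-\boldsymbol\Delta_{bq,k}/c$, $\nabla_{\mathbf v_{U,0}}\tau_{bu,k}=k\Delta_t\boldsymbol\Delta_{bu,k}/c$, $\nabla_{\mathbf v_{U,0}}\tau_{qu,k}=k\Delta_t\boldsymbol\Delta_{qu,k}/c$, $\nabla_{\check{\mathbf v}_{b,0}}\tau_{bu,k}=-k\Delta_t\boldsymbol\Delta_{bu,k}/c$,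 $\nabla_{\check{\mathbf v}_{b,0}}\tau_{bq,k}=-k\Delta_t\boldsymbol\Delta_{bq,k}/c$, $\nabla_{\mathbf v_{U,0}}\nu_{bU,k}=-\boldsymbol\Delta_{bU,k}/c$, $\nabla_{\mathbf v_{U,0}}\nu_{qU,k}=-\boldsymbol\Delta_{qU,k}/c$, $\nabla_{\check{\mathbf v}_{b,0}}\nu_{bU,k}=\boldsymbol\Delta_{bU,k}/c$, $\nabla_{\check{\mathbf v}_{b,0}}\nu_{bq,k}=\boldsymbol\Delta_{bq,k}/c$, $\nabla_{\boldsymbol\Phi_U}\tau_{xu,k}=\frac1c[\boldsymbol\Delta_{xu,k}^T\partial_{\alpha_U}\mathbf Q\tilde{\mathbf s}_u,\boldsymbol\Delta_{xu,k}^T\partial_{\psi_U}\mathbf Q\tilde{\mathbf s}_u,\boldsymbol\Delta_{xu,k}^T\partial_{\varphi_U}\mathbf Q\tilde{\mathbf s}_u]^T$ ($x\in\{b,q\}$), the Doppler position-gradients $\nabla_{\mathbf p_{U,0}}\nu_{bU,k},\nabla_{\mathbf p_{U,0}}\nu_{qU,k},\nabla_{\check{\mathbf p}_{b,0}}\nu_{bU,k},\nabla_{\check{\mathbf p}_{b,0}}\nu_{bq,k}$, and identity on gains and offsets. $\mathbf F(\mathbf x,\mathbf y)$ denotes the block of $\mathbf J_{\boldsymbol\kappa}$ for sub-vectors $\mathbf x,\mathbf y$. Information loss: split $\boldsymbol\kappa=(\boldsymbol\kappa_1,\boldsymbol\kappa_2)$ with $\boldsymbol\kappa_1=(\mathbf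 p_{U,0},\mathbf v_{U,0},\boldsymbol\Phi_U,\{\check{\mathbf p}_{b,0}\},\{\check{\mathbf v}_{b,0}\})$ and nuisance $\boldsymbol\kappa_2$ = all channel gains and all time/frequency offsets $\delta_{bU},\epsilon_{bU},\delta_{QU},\epsilon_{QU},\delta_{bQ},\epsilon_{bQ}$. The loss matrix is $\mathbf J^{nu}=\mathbf J_{\boldsymbol\kappa_1,\boldsymbol\kappa_2}\mathbf J_{\boldsymbol\kappa_2}^{-1}\mathbf J_{\boldsymbol\kappa_1,\boldsymbol\kappa_2}^T$ (so the equivalent FIM is $\mathbf J_{\boldsymbol\kappa_1}-\mathbf J^{nu}$), and $\mathbf G(\mathbf x,\mathbf y)$ denotes its block for sub-vectors $\mathbf x,\mathbf y$. *)

theory Defs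
  imports "HOL-Analysis.Analysis"
begin

text \<open>Channel parameters eta. Slots are natural numbers k, valid when k < N_K.
  Constructor arguments: LEO b, BS q, receiver antenna u, slot k.\<close>
datatype ('b,'q,'u) chp =
    TauBU 'b 'u nat | TauQU 'q 'u nat | TauBQ 'b 'q nat
  | NuBU 'b nat | NuQU 'q nat | NuBQ 'b 'q nat
  | GainBU 'b 'u nat | GainQU 'q 'u nat | GainBQ 'b 'q nat
  | DelBU 'b | EpsBU 'b | DelQU | EpsQU | DelBQ 'b | EpsBQ 'b

text \<open>Location/nuisance parameters kappa. Coordinates / orientation angles indexed by type 3.
  Nuis x is the nuisance parameter (gain or offset) x, mapped identically onto eta.\<close>
datatype ('b,'q,'u) kap =
    PU 3 | VU 3 | PhiU 3 | PcB 'b 3 | VcB 'b 3 | Nuis "('b,'q,'u) chp"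

record ('b,'q,'u) sys =
  sc :: real  \<comment> \<open>speed of light\<close>
  sfc :: real \<comment> \<open>carrier frequency\<close>
  sdt :: real \<comment> \<open>slot spacing Delta_t\<close>
  sNK :: nat  \<comment> \<open>number of slots\<close>
  Dbu :: "'b \<Rightarrow> 'u \<Rightarrow> nat \<Rightarrow> real^3"
  Dqu :: "'q \<Rightarrow> 'u \<Rightarrow> nat \<Rightarrow> real^3"
  Dbq :: "'b \<Rightarrow> 'q \<Rightarrow> nat \<Rightarrow> real^3"
  DbU :: "'b \<Rightarrow> nat \<Rightarrow> real^3"
  DqU :: "'q \<Rightarrow> nat \<Rightarrow> real^3"
  dQs :: "3 \<Rightarrow> 'u \<Rightarrow> real^3"  \<comment> \<open>partial derivative of Q wrt angle a, applied to s_u\<close>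
  gpNuBU :: "'b \<Rightarrow> nat \<Rightarrow> real^3"  \<comment> \<open>grad_{p_U0} nu_bU,k\<close>
  gpNuQU :: "'q \<Rightarrow> nat \<Rightarrow> real^3"  \<comment> \<open>grad_{p_U0} nu_qU,k\<close>
  gcNuBU :: "'b \<Rightarrow> nat \<Rightarrow> real^3"  \<comment> \<open>grad_{pcheck_b0} nu_bU,k\<close>
  gcNuBQ :: "'b \<Rightarrow> 'q \<Rightarrow> nat \<Rightarrow> real^3"  \<comment> \<open>grad_{pcheck_b0} nu_bq,k\<close>
  snrBU :: "'b \<Rightarrow> 'u \<Rightarrow> nat \<Rightarrow> real"
  snrQU :: "'q \<Rightarrow> 'u \<Rightarrow> nat \<Rightarrow> real"
  snrBQ :: "'b \<Rightarrow> 'q \<Rightarrow> nat \<Rightarrow> real"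
  aoBU :: "'b \<Rightarrow> 'u \<Rightarrow> nat \<Rightarrow> real"
  aoQU :: "'q \<Rightarrow> 'u \<Rightarrow> nat \<Rightarrow> real"
  aoBQ :: "'b \<Rightarrow> 'q \<Rightarrow> nat \<Rightarrow> real"
  a1B :: "'b \<Rightarrow> nat \<Rightarrow> real"
  a2B :: "'b \<Rightarrow> nat \<Rightarrow> real"
  a1Q :: "'q \<Rightarrow> nat \<Rightarrow> real"
  a2Q :: "'q \<Rightarrow> nat \<Rightarrow> real"
  nuBUv :: "'b \<Rightarrow> nat \<Rightarrow> real"
  nuQUv :: "'q \<Rightarrow> nat \<Rightarrow> real"
  nuBQv :: "'b \<Rightarrow> 'q \<Rightarrow> nat \<Rightarrow> real"
  epsBUv :: "'b \<Rightarrow> real"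
  epsQUv :: real
  epsBQv :: "'b \<Rightarrow> real"
  gBU :: "'b \<Rightarrow> 'u \<Rightarrow> nat \<Rightarrow> real"  \<comment> \<open>gain-only diagonal FIM terms\<close>
  gQU :: "'q \<Rightarrow> 'u \<Rightarrow> nat \<Rightarrow> real"
  gBQ :: "'b \<Rightarrow> 'q \<Rightarrow> nat \<Rightarrow> real"

definition omBU :: "('b,'q,'u,'z) sys_scheme \<Rightarrow> 'b \<Rightarrow> nat \<Rightarrow> real" where
  "omBU S b k = (let f = sfc S * (1 - nuBUv S b k) + epsBUv S b in
     (a1B S b k)\<^sup>2 + 2 * f * a1B S b k * a2B S b k + f\<^sup>2)"

definition omQU :: "('b,'q,'u,'z) sys_scheme \<Rightarrow> 'q \<Rightarrow> nat \<Rightarrow> real" where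
  "omQU S q k = (let f = sfc S * (1 - nuQUv S q k) + epsQUv S in
     (a1Q S q k)\<^sup>2 + 2 * f * a1Q S q k * a2Q S q k + f\<^sup>2)"

definition omBQ :: "('b,'q,'u,'z) sys_scheme \<Rightarrow> 'b \<Rightarrow> 'q \<Rightarrow> nat \<Rightarrow> real" where
  "omBQ S b q k = (let f = sfc S * (1 - nuBQv S b q k) + epsBQv S b in
     (a1Q S q k)\<^sup>2 + 2 * f * a1Q S q k * a2Q S q k + f\<^sup>2)"

definition Jeta :: "('b::finite,'q::finite,'u::finite,'z) sys_scheme \<Rightarrow> ('b,'q,'u) chp \<Rightarrow> ('b,'q,'u) chp \<Rightarrow> real" where
  "Jeta S e e' = (case e of
     TauBU b u k \<Rightarrow> (case e' of
         TauBU b' u' k' \<Rightarrow> (if b = b' \<and> u = u' \<and> k = k' then snrBU S b u k * omBU S b k else 0)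
       | DelBU b' \<Rightarrow> (if b = b' then - (snrBU S b u k * omBU S b k) else 0)
       | _ \<Rightarrow> 0)
   | DelBU b' \<Rightarrow> (case e' of
         TauBU b u k \<Rightarrow> (if b = b' then - (snrBU S b u k * omBU S b k) else 0)
       | DelBU b \<Rightarrow> (if b = b' then (\<Sum>u\<in>UNIV. \<Sum>k<sNK S. snrBU S b u k * omBU S b k) else 0)
       | _ \<Rightarrow> 0)
   | NuBU b k \<Rightarrow> (case e' of
         NuBU b' k' \<Rightarrow> (if b = b' \<and> k = k'
            then (\<Sum>u\<in>UNIV. 1/2 * snrBU S b u k * (sfc S)\<^sup>2 * (aoBU S b u k)\<^sup>2) else 0)
       | EpsBU b' \<Rightarrow> (if b = b' then (\<Sum>u\<in>UNIV. - (1/2 * snrBU S b u k * sfc S * (aoBU S b u k)\<^sup>2)) else 0)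
       | _ \<Rightarrow> 0)
   | EpsBU b' \<Rightarrow> (case e' of
         NuBU b k \<Rightarrow> (if b = b' then (\<Sum>u\<in>UNIV. - (1/2 * snrBU S b u k * sfc S * (aoBU S b u k)\<^sup>2)) else 0)
       | EpsBU b \<Rightarrow> (if b = b' then (\<Sum>u\<in>UNIV. \<Sum>k<sNK S. 1/2 * snrBU S b u k * (aoBU S b u k)\<^sup>2) else 0)
       | _ \<Rightarrow> 0)
   | TauQU q u k \<Rightarrow> (case e' of
         TauQU q' u' k' \<Rightarrow> (if q = q' \<and> u = u' \<and> k = k' then snrQU S q u k * omQU S q k else 0)
       | DelQU \<Rightarrow> - (snrQU S q u k * omQU S q k)
       | _ \<Rightarrow> 0)
   | DelQU \<Rightarrow> (case e' of
         TauQU q u k \<Rightarrow> - (snrQU S q u k * omQU S q k)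
       | DelQU \<Rightarrow> (\<Sum>q\<in>UNIV. \<Sum>u\<in>UNIV. \<Sum>k<sNK S. snrQU S q u k * omQU S q k)
       | _ \<Rightarrow> 0)
   | NuQU q k \<Rightarrow> (case e' of
         NuQU q' k' \<Rightarrow> (if q = q' \<and> k = k'
            then (\<Sum>u\<in>UNIV. 1/2 * snrQU S q u k * (sfc S)\<^sup>2 * (aoQU S q u k)\<^sup>2) else 0)
       | EpsQU \<Rightarrow> (\<Sum>u\<in>UNIV. - (1/2 * snrQU S q u k * sfc S * (aoQU S q u k)\<^sup>2))
       | _ \<Rightarrow> 0)
   | EpsQU \<Rightarrow> (case e' of
         NuQU q k \<Rightarrow> (\<Sum>u\<in>UNIV. - (1/2 * snrQU S q u k * sfc S * (aoQU S q u k)\<^sup>2))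
       | EpsQU \<Rightarrow> (\<Sum>q\<in>UNIV. \<Sum>u\<in>UNIV. \<Sum>k<sNK S. 1/2 * snrQU S q u k * (aoQU S q u k)\<^sup>2)
       | _ \<Rightarrow> 0)
   | TauBQ b q k \<Rightarrow> (case e' of
         TauBQ b' q' k' \<Rightarrow> (if b = b' \<and> q = q' \<and> k = k' then snrBQ S b q k * omBQ S b q k else 0)
       | DelBQ b' \<Rightarrow> (if b = b' then - (snrBQ S b q k * omBQ S b q k) else 0)
       | _ \<Rightarrow> 0)
   | DelBQ b' \<Rightarrow> (case e' of
         TauBQ b q k \<Rightarrow> (if b = b' then - (snrBQ S b q k * omBQ S b q k) else 0)
       | DelBQ b \<Rightarrow> (if b = b' then (\<Sum>q\<in>UNIV. \<Sum>k<sNK S. snrBQ S b q k * omBQ S b q k) else 0)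
       | _ \<Rightarrow> 0)
   | NuBQ b q k \<Rightarrow> (case e' of
         NuBQ b' q' k' \<Rightarrow> (if b = b' \<and> q = q' \<and> k = k'
            then 1/2 * snrBQ S b q k * (sfc S)\<^sup>2 * (aoBQ S b q k)\<^sup>2 else 0)
       | EpsBQ b' \<Rightarrow> (if b = b' then - (1/2 * snrBQ S b q k * sfc S * (aoBQ S b q k)\<^sup>2) else 0)
       | _ \<Rightarrow> 0)
   | EpsBQ b' \<Rightarrow> (case e' of
         NuBQ b q k \<Rightarrow> (if b = b' then - (1/2 * snrBQ S b q k * sfc S * (aoBQ S b q k)\<^sup>2) else 0)
       | EpsBQ b \<Rightarrow> (if b = b' then (\<Sum>q\<in>UNIV. \<Sum>k<sNK S. 1/2 * snrBQ S b q k * (aoBQ S b q k)\<^sup>2) else 0)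
       | _ \<Rightarrow> 0)
   | GainBU b u k \<Rightarrow> (case e' of
         GainBU b' u' k' \<Rightarrow> (if b = b' \<and> u = u' \<and> k = k' then gBU S b u k else 0) | _ \<Rightarrow> 0)
   | GainQU q u k \<Rightarrow> (case e' of
         GainQU q' u' k' \<Rightarrow> (if q = q' \<and> u = u' \<and> k = k' then gQU S q u k else 0) | _ \<Rightarrow> 0)
   | GainBQ b q k \<Rightarrow> (case e' of
         GainBQ b' q' k' \<Rightarrow> (if b = b' \<and> q = q' \<and> k = k' then gBQ S b q k else 0) | _ \<Rightarrow> 0))"

text \<open>Jacobian Upsilon: Ups S x e = derivative of channel parameter e wrt kappa-parameter x.\<close>
definition Ups :: "('b,'q,'u,'z) sys_scheme \<Rightarrow> ('b,'q,'u) kap \<Rightarrow> ('b,'q,'u) chp \<Rightarrow> real" where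
  "Ups S x e = (case x of
     PU i \<Rightarrow> (case e of
         TauBU b u k \<Rightarrow> Dbu S b u k $ i / sc S
       | TauQU q u k \<Rightarrow> Dqu S q u k $ i / sc S
       | NuBU b k \<Rightarrow> gpNuBU S b k $ i
       | NuQU q k \<Rightarrow> gpNuQU S q k $ i
       | _ \<Rightarrow> 0)
   | PcB b' i \<Rightarrow> (case e of
         TauBU b u k \<Rightarrow> (if b = b' then - (Dbu S b u k $ i / sc S) else 0)
       | TauBQ b q k \<Rightarrow> (if b = b' then - (Dbq S b q k $ i / sc S) else 0)
       | NuBU b k \<Rightarrow> (if b = b' then gcNuBU S b k $ i else 0)
       | NuBQ b q k \<Rightarrow> (if b = b' then gcNuBQ S b q k $ i else 0)
       | _ \<Rightarrow> 0)
   | VU i \<Rightarrow> (case e of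
         TauBU b u k \<Rightarrow> real k * sdt S * Dbu S b u k $ i / sc S
       | TauQU q u k \<Rightarrow> real k * sdt S * Dqu S q u k $ i / sc S
       | NuBU b k \<Rightarrow> - (DbU S b k $ i / sc S)
       | NuQU q k \<Rightarrow> - (DqU S q k $ i / sc S)
       | _ \<Rightarrow> 0)
   | VcB b' i \<Rightarrow> (case e of
         TauBU b u k \<Rightarrow> (if b = b' then - (real k * sdt S * Dbu S b u k $ i / sc S) else 0)
       | TauBQ b q k \<Rightarrow> (if b = b' then - (real k * sdt S * Dbq S b q k $ i / sc S) else 0)
       | NuBU b k \<Rightarrow> (if b = b' then DbU S b k $ i / sc S else 0)
       | NuBQ b q k \<Rightarrow> (if b = b' then Dbq S b q k $ i / sc S else 0)
       | _ \<Rightarrow> 0)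
   | PhiU a \<Rightarrow> (case e of
         TauBU b u k \<Rightarrow> (Dbu S b u k \<bullet> dQs S a u) / sc S
       | TauQU q u k \<Rightarrow> (Dqu S q u k \<bullet> dQs S a u) / sc S
       | _ \<Rightarrow> 0)
   | Nuis y \<Rightarrow> (if e = y then 1 else 0))"

definition Eset :: "('b,'q,'u,'z) sys_scheme \<Rightarrow> ('b,'q,'u) chp set" where
  "Eset S =
     {TauBU b u k |b u k. k < sNK S} \<union> {TauQU q u k |q u k. k < sNK S} \<union> {TauBQ b q k |b q k. k < sNK S}
   \<union> {NuBU b k |b k. k < sNK S} \<union> {NuQU q k |q k. k < sNK S} \<union> {NuBQ b q k |b q k. k < sNK S}
   \<union> {GainBU b u k |b u k. k < sNK S} \<union> {GainQU q u k |q u k. k < sNK S} \<union> {GainBQ b q k |b q k. k < sNK S}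
   \<union> range DelBU \<union> range EpsBU \<union> {DelQU, EpsQU} \<union> range DelBQ \<union> range EpsBQ"

definition K2 :: "('b,'q,'u,'z) sys_scheme \<Rightarrow> ('b,'q,'u) kap set" where
  "K2 S = Nuis ` (
     {GainBU b u k |b u k. k < sNK S} \<union> {GainQU q u k |q u k. k < sNK S} \<union> {GainBQ b q k |b q k. k < sNK S}
   \<union> range DelBU \<union> range EpsBU \<union> {DelQU, EpsQU} \<union> range DelBQ \<union> range EpsBQ)"

definition Jkap :: "('b::finite,'q::finite,'u::finite,'z) sys_scheme \<Rightarrow> ('b,'q,'u) kap \<Rightarrow> ('b,'q,'u) kap \<Rightarrow> real" where
  "Jkap S x y = (\<Sum>e\<in>Eset S. \<Sum>e'\<in>Eset S. Ups S x e * Jeta S e e' * Ups S y e')"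

definition inv_on :: "'i set \<Rightarrow> ('i \<Rightarrow> 'i \<Rightarrow> real) \<Rightarrow> ('i \<Rightarrow> 'i \<Rightarrow> real)" where
  "inv_on I A = (THE M. (\<forall>i\<in>I. \<forall>l\<in>I. (\<Sum>j\<in>I. A i j * M j l) = (if i = l then 1 else 0))
                       \<and> (\<forall>i j. i \<notin> I \<or> j \<notin> I \<longrightarrow> M i j = 0))"

text \<open>Loss matrix J^nu = J_{k1,k2} J_{k2}^{-1} J_{k1,k2}^T (entries G(x,y)).\<close>
definition Jnu :: "('b::finite,'q::finite,'u::finite,'z) sys_scheme \<Rightarrow> ('b,'q,'u) kap \<Rightarrow> ('b,'q,'u) kap \<Rightarrow> real" where
  "Jnu S x y = (\<Sum>z\<in>K2 S. \<Sum>z'\<in>K2 S. Jkap S x z * inv_on (K2 S) (Jkap S) z z' * Jkap S y z')"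

definition aB :: "('b::finite,'q::finite,'u::finite,'z) sys_scheme \<Rightarrow> 'b \<Rightarrow> real^3" where
  "aB S b = (\<Sum>k<sNK S. \<Sum>u\<in>UNIV. (snrBU S b u k * omBU S b k / sc S) *\<^sub>R Dbu S b u k)"

definition aQ :: "('b::finite,'q::finite,'u::finite,'z) sys_scheme \<Rightarrow> real^3" where
  "aQ S = (\<Sum>q\<in>UNIV. \<Sum>u\<in>UNIV. \<Sum>k<sNK S. (snrQU S q u k * omQU S q k / sc S) *\<^sub>R Dqu S q u k)"

definition dB :: "('b::finite,'q::finite,'u::finite,'z) sys_scheme \<Rightarrow> 'b \<Rightarrow> real^3" where
  "dB S b = (\<Sum>u\<in>UNIV. \<Sum>k<sNK S. (snrBU S b u k * sfc S * (aoBU S b u k)\<^sup>2 / 2) *\<^sub>R gpNuBU S b k)"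

definition dQ :: "('b::finite,'q::finite,'u::finite,'z) sys_scheme \<Rightarrow> real^3" where
  "dQ S = (\<Sum>q\<in>UNIV. \<Sum>u\<in>UNIV. \<Sum>k<sNK S. (snrQU S q u k * sfc S * (aoQU S q u k)\<^sup>2 / 2) *\<^sub>R gpNuQU S q k)"

end

theory Submission
  imports Defs
begin

text \<open>The nuisance block of the location FIM is diagonal: distinct gains and offsets never
  meet in a nonzero entry of the channel FIM, and the Jacobian maps every nuisance identically
  onto itself. The loss matrix is therefore a sum of rank-one terms \<open>J(p,z) J(p,z)\<^sup>T / J(z,z)\<close>
  over the nuisances \<open>z\<close>. The receiver position moves only the delays and Dopplers of the links
  ending at the receiver, and among the nuisances these couple only to the receiver-side
  offsets \<open>\<delta>\<^sub>b\<^sub>U, \<epsilon>\<^sub>b\<^sub>U, \<delta>\<^sub>Q\<^sub>U, \<epsilon>\<^sub>Q\<^sub>U\<close>, with cross terms \<open>-a\<^sub>b, -d\<^sub>b, -a\<^sub>Q, -d\<^sub>Q\<close>; their diagonal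
  FIM entries are the four denominators.\<close>

lemma sum_eq_sum_reindex_support:
  assumes "finite A" "inj_on g T" "g ` T \<subseteq> A" "\<And>e. e \<in> A \<Longrightarrow> e \<notin> g ` T \<Longrightarrow> f e = 0"
  shows "sum f A = sum (f \<circ> g) T"
proof -
  have "sum f A = sum f (g ` T)"
    by (rule sum.mono_neutral_right) (use assms finite_subset in auto)
  also have "\<dots> = sum (f \<circ> g) T" by (rule sum.reindex[OF assms(2)])
  finally show ?thesis .
qed

lemma inv_on_diagonal:
  assumes "finite I" "\<And>i j. i \<in> I \<Longrightarrow> j \<in> I \<Longrightarrow> i \<noteq> j \<Longrightarrow> A i j = 0"
    and "\<And>i. i \<in> I \<Longrightarrow> A i i \<noteq> 0"
  shows "inv_on I A = (\<lambda>i j. if i \<in> I \<and> j = i then 1 / A i i else 0)"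
  unfolding inv_on_def
proof (rule the_equality)
  have "(\<Sum>j\<in>I. A i j * (if j \<in> I \<and> l = j then 1 / A j j else 0)) = (if i = l then 1 else 0)"
    if "i \<in> I" "l \<in> I" for i l
  proof -
    have "(\<Sum>j\<in>I. A i j * (if j \<in> I \<and> l = j then 1 / A j j else 0)) = A i l / A l l"
      using that assms(1) by (simp add: if_distrib[of "\<lambda>t. A i _ * t"] cong: if_cong)
    then show ?thesis using that assms(2,3) by auto
  qed
  then show "(\<forall>i\<in>I. \<forall>l\<in>I. (\<Sum>j\<in>I. A i j * (if j \<in> I \<and> l = j then 1 / A j j else 0))
        = (if i = l then 1 else 0))
      \<and> (\<forall>i j. i \<notin> I \<or> j \<notin> I \<longrightarrow> (if i \<in> I \<and> j = i then 1 / A i i else 0) = 0)"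
    by auto
next
  fix M assume M: "(\<forall>i\<in>I. \<forall>l\<in>I. (\<Sum>j\<in>I. A i j * M j l) = (if i = l then 1 else 0))
      \<and> (\<forall>i j. i \<notin> I \<or> j \<notin> I \<longrightarrow> M i j = 0)"
  have "M i l = (if i \<in> I \<and> l = i then 1 / A i i else 0)" for i l
  proof (cases "i \<in> I \<and> l \<in> I")
    case True
    have "(\<Sum>j\<in>I. A i j * M j l) = (\<Sum>j\<in>I. if j = i then A i i * M i l else 0)"
      by (rule sum.cong) (use True assms(2) in auto)
    then have "A i i * M i l = (if i = l then 1 else 0)" using M True assms(1) by simp
    then show ?thesis using True assms(3)[of i] by (auto simp: field_simps)
  qed (use M in auto)
  then show "M = (\<lambda>i j. if i \<in> I \<and> j = i then 1 / A i i else 0)" by blast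
qed

lemma bilinear_inv_on_diagonal:
  assumes "finite I" "\<And>i j. i \<in> I \<Longrightarrow> j \<in> I \<Longrightarrow> i \<noteq> j \<Longrightarrow> A i j = 0"
    and "\<And>i. i \<in> I \<Longrightarrow> A i i \<noteq> 0"
  shows "(\<Sum>i\<in>I. \<Sum>j\<in>I. x i * inv_on I A i j * y j) = (\<Sum>i\<in>I. x i * y i / A i i)"
  using assms(1) by (simp add: inv_on_diagonal[OF assms] if_distrib[of "\<lambda>t. _ * t * _"] cong: if_cong)

lemma finite_Eset: "finite (Eset (S::('b::finite,'q::finite,'u::finite,'z) sys_scheme))"
proof -
  define D where "D = (UNIV \<times> UNIV \<times> UNIV \<times> {..<sNK S} :: ('b \<times> 'q \<times> 'u \<times> nat) set)"
  have covering: "Eset S \<subseteq> (\<lambda>(b,q,u,k). TauBU b u k) ` D \<union> (\<lambda>(b,q,u,k). TauQU q u k) ` D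
     \<union> (\<lambda>(b,q,u,k). TauBQ b q k) ` D \<union> (\<lambda>(b,q,u,k). NuBU b k) ` D
     \<union> (\<lambda>(b,q,u,k). NuQU q k) ` D \<union> (\<lambda>(b,q,u,k). NuBQ b q k) ` D
     \<union> (\<lambda>(b,q,u,k). GainBU b u k) ` D \<union> (\<lambda>(b,q,u,k). GainQU q u k) ` D
     \<union> (\<lambda>(b,q,u,k). GainBQ b q k) ` D
     \<union> range DelBU \<union> range EpsBU \<union> {DelQU, EpsQU} \<union> range DelBQ \<union> range EpsBQ"
    unfolding Eset_def D_def by (auto simp: image_iff)
  then show ?thesis by (rule finite_subset) (simp add: D_def)
qed

lemma K2_subset_Nuis_Eset: "K2 S \<subseteq> Nuis ` Eset S"
  by (auto simp: K2_def Eset_def)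

lemma finite_K2: "finite (K2 (S::('b::finite,'q::finite,'u::finite,'z) sys_scheme))"
  by (rule finite_subset[OF K2_subset_Nuis_Eset]) (simp add: finite_Eset)

lemma receiver_offsets_in_Eset: "DelBU b \<in> Eset S" "EpsBU b \<in> Eset S" "DelQU \<in> Eset S" "EpsQU \<in> Eset S"
  by (auto simp: Eset_def)

lemma Jkap_Nuis:
  fixes S :: "('b::finite,'q::finite,'u::finite,'z) sys_scheme"
  assumes "y \<in> Eset S"
  shows "Jkap S x (Nuis y) = (\<Sum>e\<in>Eset S. Ups S x e * Jeta S e y)"
  using assms finite_Eset[of S]
  by (simp add: Jkap_def Ups_def if_distrib[of "\<lambda>t. _ * t"] cong: if_cong)

lemma Jkap_Nuis_Nuis:
  fixes S :: "('b::finite,'q::finite,'u::finite,'z) sys_scheme"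
  assumes "y \<in> Eset S" "y' \<in> Eset S"
  shows "Jkap S (Nuis y') (Nuis y) = Jeta S y' y"
  using assms finite_Eset[of S]
  by (simp add: Jkap_Nuis Ups_def if_distrib[of "\<lambda>t. t * _"] cong: if_cong)

lemma Jkap_nuisance_offdiag:
  fixes S :: "('b::finite,'q::finite,'u::finite,'z) sys_scheme"
  assumes "z \<in> K2 S" "z' \<in> K2 S" "z \<noteq> z'"
  shows "Jkap S z z' = 0"
proof -
  obtain y y' where "z = Nuis y" "y \<in> Eset S" "z' = Nuis y'" "y' \<in> Eset S"
    using assms(1,2) K2_subset_Nuis_Eset by blast
  moreover have "Jeta S y y' = 0"
    using assms \<open>z = Nuis y\<close> \<open>z' = Nuis y'\<close> by (cases y; cases y') (auto simp: Jeta_def K2_def)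
  ultimately show ?thesis by (simp add: Jkap_Nuis_Nuis)
qed

lemma Jkap_nuisance_pos:
  fixes S :: "('b::finite,'q::finite,'u::finite,'z) sys_scheme"
  assumes "sNK S > 0"
    and "\<And>b u k. k < sNK S \<Longrightarrow> snrBU S b u k > 0"
    and "\<And>q u k. k < sNK S \<Longrightarrow> snrQU S q u k > 0"
    and "\<And>b q k. k < sNK S \<Longrightarrow> snrBQ S b q k > 0"
    and "\<And>b u k. k < sNK S \<Longrightarrow> aoBU S b u k > 0"
    and "\<And>q u k. k < sNK S \<Longrightarrow> aoQU S q u k > 0"
    and "\<And>b q k. k < sNK S \<Longrightarrow> aoBQ S b q k > 0"
    and "\<And>b k. k < sNK S \<Longrightarrow> omBU S b k > 0"
    and "\<And>q k. k < sNK S \<Longrightarrow> omQU S q k > 0"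
    and "\<And>b q k. k < sNK S \<Longrightarrow> omBQ S b q k > 0"
    and "\<And>b u k. k < sNK S \<Longrightarrow> gBU S b u k > 0"
    and "\<And>q u k. k < sNK S \<Longrightarrow> gQU S q u k > 0"
    and "\<And>b q k. k < sNK S \<Longrightarrow> gBQ S b q k > 0"
    and "z \<in> K2 S"
  shows "Jkap S z z > 0"
proof -
  obtain y where y: "z = Nuis y" "y \<in> Eset S" using \<open>z \<in> K2 S\<close> K2_subset_Nuis_Eset by blast
  have slots: "{..<sNK S} \<noteq> {}" using assms(1) by auto
  have "Jeta S y y > 0"
    using \<open>z \<in> K2 S\<close> y(1) slots assms(2-13) assms(5-7)[THEN order_less_imp_not_eq2]
    by (cases y) (auto simp: Jeta_def K2_def intro!: sum_pos mult_pos_pos)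
  then show ?thesis using y by (simp add: Jkap_Nuis_Nuis)
qed

definition receiver_offsets :: "('b,'q,'u) kap set" where
  "receiver_offsets = Nuis ` (range DelBU \<union> range EpsBU \<union> {DelQU, EpsQU})"

lemma receiver_offsets_subset_K2: "receiver_offsets \<subseteq> K2 S"
  by (auto simp: receiver_offsets_def K2_def)

lemma sum_receiver_offsets:
  "sum h (receiver_offsets :: ('b::finite,'q,'u) kap set) =
     (\<Sum>b\<in>UNIV. h (Nuis (DelBU b))) + h (Nuis DelQU) + (\<Sum>b\<in>UNIV. h (Nuis (EpsBU b))) + h (Nuis EpsQU)"
proof -
  have "sum h receiver_offsets
      = sum h (range (\<lambda>b. Nuis (DelBU b)) \<union> range (\<lambda>b. Nuis (EpsBU b)) \<union> {Nuis DelQU, Nuis EpsQU})"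
    by (rule arg_cong[where f = "sum h"]) (auto simp: receiver_offsets_def)
  also have "\<dots> = sum h (range (\<lambda>b. Nuis (DelBU b))) + sum h (range (\<lambda>b. Nuis (EpsBU b)))
      + sum h {Nuis DelQU, Nuis EpsQU}"
    by (subst sum.union_disjoint, auto)+
  also have "\<dots> = (\<Sum>b\<in>UNIV. h (Nuis (DelBU b))) + h (Nuis DelQU) + (\<Sum>b\<in>UNIV. h (Nuis (EpsBU b))) + h (Nuis EpsQU)"
    by (simp add: sum.reindex inj_on_def ac_simps)
  finally show ?thesis .
qed

lemma Jkap_PU_eq_0:
  fixes S :: "('b::finite,'q::finite,'u::finite,'z) sys_scheme"
  assumes "z \<in> K2 S" "z \<notin> receiver_offsets"
  shows "Jkap S (PU i) z = 0"
proof -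
  obtain y where y: "z = Nuis y" "y \<in> Eset S" using assms(1) K2_subset_Nuis_Eset by blast
  have "Ups S (PU i) e * Jeta S e y = 0" for e
    using assms y(1) by (cases y; cases e) (auto simp: Ups_def Jeta_def K2_def receiver_offsets_def)
  then show ?thesis using y by (simp only: Jkap_Nuis sum.neutral_const)
qed

lemma Jkap_PU_DelBU:
  fixes S :: "('b::finite,'q::finite,'u::finite,'z) sys_scheme"
  shows "Jkap S (PU i) (Nuis (DelBU b)) = - aB S b $ i"
proof -
  let ?f = "\<lambda>e. Ups S (PU i) e * Jeta S e (DelBU b)"
  have "sum ?f (Eset S) = sum (?f \<circ> (\<lambda>(u,k). TauBU b u k)) (UNIV \<times> {..<sNK S})"
  proof (rule sum_eq_sum_reindex_support[OF finite_Eset])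
    show "?f e = 0" if "e \<in> Eset S" "e \<notin> (\<lambda>(u,k). TauBU b u k) ` (UNIV \<times> {..<sNK S})" for e
      using that by (cases e) (auto simp: Ups_def Jeta_def Eset_def image_iff)
  qed (auto simp: inj_on_def Eset_def)
  also have "\<dots> = (\<Sum>u\<in>UNIV. \<Sum>k<sNK S. - (snrBU S b u k * omBU S b k / sc S * Dbu S b u k $ i))"
    by (simp add: case_prod_unfold comp_def sum.cartesian_product Ups_def Jeta_def mult_ac)
  also have "\<dots> = - aB S b $ i"
    by (simp add: aB_def sum_negf sum.swap[of _ UNIV])
  finally show ?thesis by (simp add: Jkap_Nuis receiver_offsets_in_Eset)
qed

lemma Jkap_PU_DelQU:
  fixes S :: "('b::finite,'q::finite,'u::finite,'z) sys_scheme"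
  shows "Jkap S (PU i) (Nuis DelQU) = - aQ S $ i"
proof -
  let ?f = "\<lambda>e. Ups S (PU i) e * Jeta S e DelQU"
  have "sum ?f (Eset S) = sum (?f \<circ> (\<lambda>(q,u,k). TauQU q u k)) (UNIV \<times> UNIV \<times> {..<sNK S})"
  proof (rule sum_eq_sum_reindex_support[OF finite_Eset])
    show "?f e = 0" if "e \<in> Eset S" "e \<notin> (\<lambda>(q,u,k). TauQU q u k) ` (UNIV \<times> UNIV \<times> {..<sNK S})" for e
      using that by (cases e) (auto simp: Ups_def Jeta_def Eset_def image_iff)
  qed (auto simp: inj_on_def Eset_def)
  also have "\<dots> = (\<Sum>q\<in>UNIV. \<Sum>u\<in>UNIV. \<Sum>k<sNK S. - (snrQU S q u k * omQU S q k / sc S * Dqu S q u k $ i))"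
    by (simp add: case_prod_unfold comp_def sum.cartesian_product Ups_def Jeta_def mult_ac)
  also have "\<dots> = - aQ S $ i"
    by (simp add: aQ_def sum_negf)
  finally show ?thesis by (simp add: Jkap_Nuis receiver_offsets_in_Eset)
qed

lemma Jkap_PU_EpsBU:
  fixes S :: "('b::finite,'q::finite,'u::finite,'z) sys_scheme"
  shows "Jkap S (PU i) (Nuis (EpsBU b)) = - dB S b $ i"
proof -
  let ?f = "\<lambda>e. Ups S (PU i) e * Jeta S e (EpsBU b)"
  have "sum ?f (Eset S) = sum (?f \<circ> NuBU b) {..<sNK S}"
  proof (rule sum_eq_sum_reindex_support[OF finite_Eset])
    show "?f e = 0" if "e \<in> Eset S" "e \<notin> NuBU b ` {..<sNK S}" for e
      using that by (cases e) (auto simp: Ups_def Jeta_def Eset_def image_iff)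
  qed (auto simp: inj_on_def Eset_def)
  also have "\<dots> = - dB S b $ i"
    by (simp add: Ups_def Jeta_def sum_distrib_left dB_def sum_negf sum.swap[of _ "{..<sNK S}"] mult_ac)
  finally show ?thesis by (simp add: Jkap_Nuis receiver_offsets_in_Eset)
qed

lemma Jkap_PU_EpsQU:
  fixes S :: "('b::finite,'q::finite,'u::finite,'z) sys_scheme"
  shows "Jkap S (PU i) (Nuis EpsQU) = - dQ S $ i"
proof -
  let ?f = "\<lambda>e. Ups S (PU i) e * Jeta S e EpsQU"
  have "sum ?f (Eset S) = sum (?f \<circ> (\<lambda>(q,k). NuQU q k)) (UNIV \<times> {..<sNK S})"
  proof (rule sum_eq_sum_reindex_support[OF finite_Eset])
    show "?f e = 0" if "e \<in> Eset S" "e \<notin> (\<lambda>(q,k). NuQU q k) ` (UNIV \<times> {..<sNK S})" for e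
      using that by (cases e) (auto simp: Ups_def Jeta_def Eset_def image_iff)
  qed (auto simp: inj_on_def Eset_def)
  also have "\<dots> = (\<Sum>q\<in>UNIV. \<Sum>k<sNK S. \<Sum>u\<in>UNIV.
      - (snrQU S q u k * sfc S * (aoQU S q u k)\<^sup>2 / 2 * gpNuQU S q k $ i))"
    by (subst sum.cartesian_product) (simp add: case_prod_unfold comp_def Ups_def Jeta_def sum_distrib_left mult_ac)
  also have "\<dots> = - dQ S $ i"
    by (simp add: dQ_def sum_negf sum.swap[of _ "{..<sNK S}"])
  finally show ?thesis by (simp add: Jkap_Nuis receiver_offsets_in_Eset)
qed

theorem lemma16:
  fixes S :: "('b::finite,'q::finite,'u::finite,'z) sys_scheme"
  assumes "sc S > 0" and "sNK S > 0"
    and "\<And>b u k. k < sNK S \<Longrightarrow> snrBU S b u k > 0"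
    and "\<And>q u k. k < sNK S \<Longrightarrow> snrQU S q u k > 0"
    and "\<And>b q k. k < sNK S \<Longrightarrow> snrBQ S b q k > 0"
    and "\<And>b u k. k < sNK S \<Longrightarrow> aoBU S b u k > 0"
    and "\<And>q u k. k < sNK S \<Longrightarrow> aoQU S q u k > 0"
    and "\<And>b q k. k < sNK S \<Longrightarrow> aoBQ S b q k > 0"
    and "\<And>b k. k < sNK S \<Longrightarrow> omBU S b k > 0"
    and "\<And>q k. k < sNK S \<Longrightarrow> omQU S q k > 0"
    and "\<And>b q k. k < sNK S \<Longrightarrow> omBQ S b q k > 0"
    and "\<And>b u k. k < sNK S \<Longrightarrow> gBU S b u k > 0"
    and "\<And>q u k. k < sNK S \<Longrightarrow> gQU S q u k > 0"
    and "\<And>b q k. k < sNK S \<Longrightarrow> gBQ S b q k > 0"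
  shows "\<forall>i j. Jnu S (PU i) (PU j) =
      (\<Sum>b\<in>UNIV. aB S b $ i * aB S b $ j
          / (\<Sum>u\<in>UNIV. \<Sum>k<sNK S. snrBU S b u k * omBU S b k))
    + aQ S $ i * aQ S $ j
          / (\<Sum>q\<in>UNIV. \<Sum>u\<in>UNIV. \<Sum>k<sNK S. snrQU S q u k * omQU S q k)
    + (\<Sum>b\<in>UNIV. dB S b $ i * dB S b $ j
          / (\<Sum>u\<in>UNIV. \<Sum>k<sNK S. 1/2 * snrBU S b u k * (aoBU S b u k)\<^sup>2))
    + dQ S $ i * dQ S $ j
          / (\<Sum>q\<in>UNIV. \<Sum>u\<in>UNIV. \<Sum>k<sNK S. 1/2 * snrQU S q u k * (aoQU S q u k)\<^sup>2)"
proof -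
  have nonzero: "Jkap S z z \<noteq> 0" if "z \<in> K2 S" for z
    using Jkap_nuisance_pos[OF assms(2-14) that] by simp
  let ?w = "\<lambda>i j z. Jkap S (PU i) z * Jkap S (PU j) z / Jkap S z z"
  have "Jnu S (PU i) (PU j) = (\<Sum>z\<in>receiver_offsets. ?w i j z)" for i j
  proof -
    have "Jnu S (PU i) (PU j) = (\<Sum>z\<in>K2 S. ?w i j z)"
      unfolding Jnu_def by (rule bilinear_inv_on_diagonal[OF finite_K2 Jkap_nuisance_offdiag nonzero])
    also have "\<dots> = (\<Sum>z\<in>receiver_offsets. ?w i j z)"
      by (rule sum.mono_neutral_right[OF finite_K2 receiver_offsets_subset_K2]) (simp add: Jkap_PU_eq_0)
    finally show ?thesis .
  qed
  then show ?thesis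
    by (simp add: sum_receiver_offsets Jkap_PU_DelBU Jkap_PU_DelQU Jkap_PU_EpsBU Jkap_PU_EpsQU
        Jkap_Nuis_Nuis receiver_offsets_in_Eset Jeta_def)
qed

end
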